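(* With the icosahedral setting of the context, for every $y_0\in\mathcal{I}$, every $u\in\mathbb{R}^3$ and every integer $n\ge1$, \[ \langle u,\nabla_\kappa\rangle q_{2n}(x;y_0)=2\langle u,y_0\rangle(6\kappa+n)\,q_{2n-1}(x;y_0), \] and for every integer $n\ge0$, \[ \langle u,\nabla_\kappa\rangle q_{2n+1}(x;y_0)=\langle u,y_0\rangle(10\kappa+2n+1)\,q_{2n}(x;y_0). \]
   Context: Let $\tau=(1+\sqrt5)/2$. Vectors in $\mathbb{R}^3$ are row vectors; $\langle x,y\rangle=\sum x_iy_i$. For $v\neq0$, $x\sigma_v=x-2\frac{\langle x,v\rangle}{|v|^2}v$. Let $R_+=\{(2,0,0),(0,2,0),(0,0,2),(\tau,\pm\tau^{-1},\pm1),(\pm1,\tau,\pm\tau^{-1}),(\tau^{-1},\pm1,\tau),(-\tau^{-1},1,\tau),(\tau^{-1},1,-\tau)\}$ (15 vectors, signs independent). For real $\kappa\ge0$ the Dunkl operators are $\mathcal{D}_if(x)=\partial_if(x)+\kappa\sum_{v\in R_+}\frac{f(x)-f(x\sigma_v)}{\langle x,v\rangle}v_i$ and $\langle u,\nabla_\kappa\rangle=\sum_iu_i\mathcal{D}_i$. Let $\mathcal{I}=\{(0,\pm\tau,\pm1),(\pm1,0,\pm\tau),(\pm\tau,\pm1,0)\}$. For $y_0\in\mathcal{I}$ the polynomials $q_n(x;y_0)$ (homogeneous of degree $n$ in $x$) are defined by the generating function $\left(1-r\langle x,y_0\rangle\right)^{-1}\prod_{y\in\mathcal{I}}\left(1-r\langle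 x,y\rangle\right)^{-\kappa}=\sum_{n\ge0}q_n(x;y_0)r^n$. *)

theory Defs
  imports "HOL-Analysis.Analysis"
begin

definition tau :: real where "tau = (1 + sqrt 5) / 2"

definition vec3 :: "real \<Rightarrow> real \<Rightarrow> real \<Rightarrow> real^3" where
  "vec3 a b c = vector [a, b, c]"

definition refl :: "real^3 \<Rightarrow> real^3 \<Rightarrow> real^3" where
  "refl v x = x - (2 * (x \<bullet> v) / (v \<bullet> v)) *\<^sub>R v"

definition sgns :: "real set" where "sgns = {1, -1}"

definition Rplus :: "(real^3) set" where
  "Rplus = {vec3 2 0 0, vec3 0 2 0, vec3 0 0 2}
     \<union> {vec3 tau (s * inverse tau) t | s t. s \<in> sgns \<and> t \<in> sgns}
     \<union> {vec3 s tau (t * inverse tau) | s t. s \<in> sgns \<and> t \<in> sgns}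
     \<union> {vec3 (inverse tau) s tau | s. s \<in> sgns}
     \<union> {vec3 (- inverse tau) 1 tau, vec3 (inverse tau) 1 (- tau)}"

definition Ico :: "(real^3) set" where
  "Ico = {vec3 0 (s * tau) t | s t. s \<in> sgns \<and> t \<in> sgns}
     \<union> {vec3 s 0 (t * tau) | s t. s \<in> sgns \<and> t \<in> sgns}
     \<union> {vec3 (s * tau) t 0 | s t. s \<in> sgns \<and> t \<in> sgns}"

definition partial :: "3 \<Rightarrow> (real^3 \<Rightarrow> real) \<Rightarrow> real^3 \<Rightarrow> real" where
  "partial i f x = deriv (\<lambda>t. f (x + t *\<^sub>R axis i 1)) 0"

definition dunkl :: "real \<Rightarrow> 3 \<Rightarrow> (real^3 \<Rightarrow> real) \<Rightarrow> real^3 \<Rightarrow> real" where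
  "dunkl k i f x = partial i f x
     + k * (\<Sum>v\<in>Rplus. (f x - f (refl v x)) / (x \<bullet> v) * (v $ i))"

definition dunkl_dir :: "real \<Rightarrow> real^3 \<Rightarrow> (real^3 \<Rightarrow> real) \<Rightarrow> real^3 \<Rightarrow> real" where
  "dunkl_dir k u f x = (\<Sum>i\<in>UNIV. (u $ i) * dunkl k i f x)"

definition genfun :: "real \<Rightarrow> real^3 \<Rightarrow> real^3 \<Rightarrow> real \<Rightarrow> real" where
  "genfun k y0 x r = inverse (1 - r * (x \<bullet> y0))
      * (\<Prod>y\<in>Ico. (1 - r * (x \<bullet> y)) powr (- k))"

text \<open>q_n(x;y0) = coefficient of r^n, i.e. n-th Taylor coefficient at r = 0.\<close>
definition q :: "real \<Rightarrow> nat \<Rightarrow> real^3 \<Rightarrow> real^3 \<Rightarrow> real" where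
  "q k n y0 x = (deriv ^^ n) (genfun k y0 x) 0 / fact n"

end

theory Submission
  imports Defs "HOL-Analysis.FPS_Convergence"
begin

text \<open>
  Write E_a(c) for the power series of (1 - c r) powr (- a).  The generating function is
  G = E_1(<x,y0>) P(x) with P(x) = prod_{y in I} E_kappa(<x,y>).  Differentiating coefficientwise
  gives the gradient term of the Dunkl operator applied to q_{m+1} as
  <u,y0> H(y0) + kappa sum_{y in I} <u,y> H(y), where H(y) is the r^m-coefficient of G E_1(<x,y>).
  Every reflection sigma_v, v in R_+, permutes I, so P(x sigma_v) = P(x) and
  E_1(a) - E_1(b) = (a - b) r E_1(a) E_1(b) turns the difference quotient of the v-term into
  <u, y0 - y0 sigma_v> H(y0 sigma_v).  Five reflections fix y0 and the other ten send it
  bijectively onto I - {y0, -y0}, so the Dunkl operator yields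
  <u,y0> (H(y0) + kappa sum_{y in I} H(y) - 2 kappa H(-y0)).  Euler's identity for the
  homogeneous q_m gives H(y0) + kappa sum_{y in I} H(y) = (m + 1 + 12 kappa) q_m, and
  2 E_1(c) E_1(-c) = E_1(c) + E_1(-c) with q_m(-x) = (-1)^m q_m(x) gives
  2 H(-y0) = (1 + (-1)^m) q_m.
\<close>

section \<open>Binomial series\<close>

definition neg_binomial_series :: "real \<Rightarrow> real \<Rightarrow> real fps" where
  "neg_binomial_series a c = fps_binomial (- a) oo (fps_const (- c) * fps_X)"

lemma neg_binomial_series_nth: "fps_nth (neg_binomial_series a c) n = ((- a) gchoose n) * (- c) ^ n"
  by (simp add: neg_binomial_series_def)

lemma neg_binomial_series_add:
  "neg_binomial_series (a + b) c = neg_binomial_series a c * neg_binomial_series b c"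
  unfolding neg_binomial_series_def minus_add fps_binomial_add_mult
  by (simp add: fps_compose_mult_distrib)

lemma neg_binomial_series_compose_linear:
  "neg_binomial_series a c oo (fps_const s * fps_X) = neg_binomial_series a (s * c)"
  by (rule fps_ext) (simp add: neg_binomial_series_nth fps_compose_linear power_mult_distrib[symmetric])

lemma neg_binomial_series_one: "neg_binomial_series 1 c = inverse (1 - fps_const c * fps_X)"
proof -
  have "(1 + fps_X) oo (fps_const (- c) * fps_X) = 1 - fps_const c * fps_X"
    by (simp add: fps_compose_add_distrib)
  then show ?thesis
    unfolding neg_binomial_series_def fps_binomial_minus_one
    by (subst fps_inverse_compose) simp_all
qed

lemma neg_binomial_series_one_mult: "neg_binomial_series 1 c * (1 - fps_const c * fps_X) = 1"
  unfolding neg_binomial_series_one by (rule inverse_mult_eq_1) simp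

lemma fps_X_mult_neg_binomial_series_one:
  "fps_const c * fps_X * neg_binomial_series 1 c = neg_binomial_series 1 c - 1"
  using neg_binomial_series_one_mult[of c] by (simp add: algebra_simps)

lemma neg_binomial_series_one_diff:
  "neg_binomial_series 1 a - neg_binomial_series 1 b
     = fps_const (a - b) * fps_X * neg_binomial_series 1 a * neg_binomial_series 1 b"
proof -
  let ?E = "neg_binomial_series 1"
  have "?E a * ?E b * (1 - fps_const b * fps_X) = ?E a"
    using neg_binomial_series_one_mult[of b] by (simp add: mult.assoc)
  moreover have "?E a * ?E b * (1 - fps_const a * fps_X) = ?E b"
    using neg_binomial_series_one_mult[of a] by (simp add: ac_simps)
  ultimately have "?E a - ?E b = ?E a * ?E b * ((1 - fps_const b * fps_X) - (1 - fps_const a * fps_X))"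
    by (simp only: right_diff_distrib)
  also have "(1 - fps_const b * fps_X) - (1 - fps_const a * fps_X) = fps_const (a - b) * fps_X"
    by (simp add: algebra_simps flip: fps_const_sub)
  finally show ?thesis by (simp add: ac_simps)
qed

lemma neg_binomial_series_one_mult_uminus:
  "2 * (neg_binomial_series 1 c * neg_binomial_series 1 (- c))
     = neg_binomial_series 1 c + neg_binomial_series 1 (- c)"
proof -
  let ?E = "neg_binomial_series 1"
  have "?E c * ?E (- c) * (1 - fps_const (- c) * fps_X) = ?E c"
    using neg_binomial_series_one_mult[of "- c"] by (simp add: mult.assoc)
  moreover have "?E c * ?E (- c) * (1 - fps_const c * fps_X) = ?E (- c)"
    using neg_binomial_series_one_mult[of c] by (simp add: ac_simps)
  ultimately have "?E c + ?E (- c)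
      = ?E c * ?E (- c) * ((1 - fps_const (- c) * fps_X) + (1 - fps_const c * fps_X))"
    by (simp only: distrib_left)
  then show ?thesis by (simp add: mult.commute)
qed

lemma has_fps_expansion_neg_binomial_series:
  "(\<lambda>r. (1 - r * c) powr (- a)) has_fps_expansion neg_binomial_series a c"
proof -
  have sums: "(\<lambda>n. fps_nth (neg_binomial_series a c) n * r ^ n) sums (1 - r * c) powr (- a)"
    if "\<bar>r * c\<bar> < 1" for r
  proof -
    have "fps_nth (neg_binomial_series a c) n * r ^ n = ((- a) gchoose n) * (r * - c) ^ n" for n
      by (simp only: neg_binomial_series_nth power_mult_distrib mult_ac)
    then show ?thesis
      using gen_binomial_real[of "r * - c" "- a"] that by simp
  qed
  define r0 where "r0 = 1 / (\<bar>c\<bar> + 1)"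
  have "\<bar>r0 * c\<bar> < 1" "r0 > 0"
    by (auto simp: r0_def abs_mult field_simps)
  then have "fps_conv_radius (neg_binomial_series a c) \<ge> norm r0"
    unfolding fps_conv_radius_def using sums by (intro conv_radius_geI) (auto simp: sums_iff)
  moreover have "0 < ereal (norm r0)"
    using \<open>r0 > 0\<close> by simp
  ultimately have "fps_conv_radius (neg_binomial_series a c) > 0"
    by (rule order.strict_trans2[rotated])
  moreover have "open {r::real. \<bar>r * c\<bar> < 1}"
    by (intro open_Collect_less continuous_intros)
  then have "eventually (\<lambda>r::real. \<bar>r * c\<bar> < 1) (nhds 0)"
    using eventually_nhds_in_open by fastforce
  ultimately show ?thesis
    unfolding has_fps_expansion_def eval_fps_def
    by (auto intro!: sums_unique[symmetric] sums elim!: eventually_mono)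
qed

lemma has_fps_expansion_inverse_linear:
  "(\<lambda>r. inverse (1 - r * c)) has_fps_expansion neg_binomial_series 1 c"
proof -
  have "(\<lambda>r. 1 - c * r) has_fps_expansion 1 - fps_const c * fps_X"
    by (intro fps_expansion_intros)
  then show ?thesis
    unfolding neg_binomial_series_one by (subst mult.commute) (intro fps_expansion_intros; simp)
qed

lemma has_real_derivative_neg_binomial_series_nth:
  "((\<lambda>t. fps_nth (neg_binomial_series a (c + t * d)) n) has_real_derivative
     fps_nth (fps_const (a * d) * fps_X * neg_binomial_series a c * neg_binomial_series 1 c) n) (at 0)"
proof (cases n)
  case 0
  then show ?thesis by (simp add: neg_binomial_series_nth)
next
  case (Suc m)
  have "((\<lambda>t. - (c + t * d)) has_real_derivative - d) (at 0)"
    by (auto intro!: derivative_eq_intros)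
  from DERIV_cmult[OF DERIV_power[OF this, of n], of "(- a) gchoose n"]
  have "((\<lambda>t. ((- a) gchoose n) * (- (c + t * d)) ^ n) has_real_derivative
      - (of_nat (Suc m) * ((- a) gchoose Suc m)) * d * (- c) ^ m) (at 0)"
    by (simp add: Suc mult_ac)
  also have "of_nat (Suc m) * ((- a) gchoose Suc m) = - a * ((- (a + 1)) gchoose m)"
    using gbinomial_absorption[of m "- a"] by (simp only: minus_add_distrib diff_conv_add_uminus)
  also have "- (- a * ((- (a + 1)) gchoose m)) * d * (- c) ^ m
      = fps_nth (fps_const (a * d) * fps_X * neg_binomial_series (a + 1) c) n"
    by (simp add: Suc neg_binomial_series_nth fps_mult_fps_X_commute[symmetric] algebra_simps)
  finally show ?thesis
    by (simp add: neg_binomial_series_nth neg_binomial_series_add mult.assoc)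
qed

lemma fps_nth_fps_expansion_real:
  fixes f :: "real \<Rightarrow> real"
  assumes "f has_fps_expansion F"
  shows "fps_nth F n = (deriv ^^ n) f 0 / fact n"
proof -
  have "(deriv ^^ n) f has_fps_expansion (fps_deriv ^^ n) F"
    by (induction n) (simp_all add: assms has_fps_expansion_deriv)
  then have "eval_fps ((fps_deriv ^^ n) F) 0 = (deriv ^^ n) f 0"
    unfolding has_fps_expansion_def by (auto dest: eventually_nhds_x_imp_x)
  moreover have "(fps_deriv ^^ n) F = fps_nth_deriv n F"
    by (induction n) (simp_all add: fps_nth_deriv_commute[symmetric])
  ultimately show ?thesis
    by (simp add: eval_fps_at_0 fps_deriv_maclauren_0 eq_divide_eq mult.commute)
qed

section \<open>Coefficientwise derivatives of series-valued functions\<close>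

definition has_coeffwise_derivative ::
    "('a::real_vector \<Rightarrow> real fps) \<Rightarrow> real fps \<Rightarrow> 'a \<Rightarrow> 'a \<Rightarrow> bool" where
  "has_coeffwise_derivative A A' x w \<longleftrightarrow>
     (\<forall>n. ((\<lambda>t. fps_nth (A (x + t *\<^sub>R w)) n) has_real_derivative fps_nth A' n) (at 0))"

lemma has_coeffwise_derivative_mult:
  assumes "has_coeffwise_derivative A A' x w" "has_coeffwise_derivative B B' x w"
  shows "has_coeffwise_derivative (\<lambda>z. A z * B z) (A' * B x + A x * B') x w"
  unfolding has_coeffwise_derivative_def
proof
  fix n
  have "((\<lambda>t. \<Sum>i=0..n. fps_nth (A (x + t *\<^sub>R w)) i * fps_nth (B (x + t *\<^sub>R w)) (n - i))
      has_real_derivative (\<Sum>i=0..n. fps_nth A' i * fps_nth (B (x + 0 *\<^sub>R w)) (n - i)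
          + fps_nth B' (n - i) * fps_nth (A (x + 0 *\<^sub>R w)) i)) (at 0)"
    using assms unfolding has_coeffwise_derivative_def
    by (intro DERIV_sum DERIV_mult) auto
  also have "(\<Sum>i=0..n. fps_nth A' i * fps_nth (B (x + 0 *\<^sub>R w)) (n - i)
      + fps_nth B' (n - i) * fps_nth (A (x + 0 *\<^sub>R w)) i) = fps_nth (A' * B x + A x * B') n"
    by (simp add: fps_mult_nth sum.distrib mult.commute[of "fps_nth B' _"])
  finally show "((\<lambda>t. fps_nth (A (x + t *\<^sub>R w) * B (x + t *\<^sub>R w)) n) has_real_derivative
      fps_nth (A' * B x + A x * B') n) (at 0)"
    by (simp add: fps_mult_nth)
qed

lemma has_coeffwise_derivative_prod:
  assumes "finite S" "\<And>y. y \<in> S \<Longrightarrow> has_coeffwise_derivative (A y) (A y x * D y) x w"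
  shows "has_coeffwise_derivative (\<lambda>z. \<Prod>y\<in>S. A y z) ((\<Prod>y\<in>S. A y x) * (\<Sum>y\<in>S. D y)) x w"
  using assms
proof (induction S rule: finite_induct)
  case empty
  then show ?case by (simp add: has_coeffwise_derivative_def)
next
  case (insert a S)
  then have "has_coeffwise_derivative (\<lambda>z. A a z * (\<Prod>y\<in>S. A y z))
      (A a x * D a * (\<Prod>y\<in>S. A y x) + A a x * ((\<Prod>y\<in>S. A y x) * (\<Sum>y\<in>S. D y))) x w"
    by (intro has_coeffwise_derivative_mult) auto
  with insert show ?case by (simp add: algebra_simps)
qed

lemma has_coeffwise_derivative_neg_binomial_series:
  "has_coeffwise_derivative (\<lambda>z. neg_binomial_series a (z \<bullet> y))
     (neg_binomial_series a (x \<bullet> y) * (fps_const (a * (w \<bullet> y)) * fps_X * neg_binomial_series 1 (x \<bullet> y))) x w"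
  using has_real_derivative_neg_binomial_series_nth[of a "x \<bullet> y" "w \<bullet> y"]
  by (simp add: has_coeffwise_derivative_def inner_add_left mult_ac)

section \<open>Reflections and the icosahedron\<close>

lemma inner_refl_left: "refl v x \<bullet> y = x \<bullet> refl v y"
  by (simp add: refl_def inner_diff_left inner_diff_right inner_commute)

lemma refl_refl: "refl v (refl v x) = x"
  by (cases "v = 0") (simp_all add: refl_def algebra_simps)

lemma inner_diff_refl_ratio:
  assumes "x \<bullet> v \<noteq> 0"
  shows "(x \<bullet> (y - refl v y)) / (x \<bullet> v) * (u \<bullet> v) = u \<bullet> (y - refl v y)"
  using assms by (simp add: refl_def)

lemma tau_sq: "tau * tau = tau + 1"
  unfolding tau_def by (simp add: field_simps)

lemma tau_mult_tau_left: "tau * (tau * z) = tau * z + z"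
  by (simp add: mult.assoc[symmetric] tau_sq algebra_simps)

lemma inverse_tau: "inverse tau = tau - 1"
  using tau_sq by (intro inverse_unique) (simp add: algebra_simps)

lemma tau_bounds: "1.6 < tau" "tau < 1.7"
proof -
  have "2.2 < sqrt 5" by (rule real_less_rsqrt) (simp add: power2_eq_square)
  moreover have "sqrt 5 < 2.4" by (rule real_less_lsqrt) (simp_all add: power2_eq_square)
  ultimately show "1.6 < tau" "tau < 1.7" unfolding tau_def by simp_all
qed

lemma vec3_nth [simp]: "vec3 a b c $ 1 = a" "vec3 a b c $ 2 = b" "vec3 a b c $ 3 = c"
  by (simp_all add: vec3_def)

lemma vec3_eq_iff: "vec3 a b c = vec3 d e f \<longleftrightarrow> a = d \<and> b = e \<and> c = f"
  by (auto simp: vec_eq_iff forall_3)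

lemma inner_vec3: "vec3 a b c \<bullet> vec3 d e f = a * d + b * e + c * f"
  by (simp add: inner_vec_def sum_3)

lemma vec3_diff_scaleR: "vec3 a b c - s *\<^sub>R vec3 d e f = vec3 (a - s * d) (b - s * e) (c - s * f)"
  by (simp add: vec_eq_iff forall_3)

lemma uminus_vec3: "- vec3 a b c = vec3 (- a) (- b) (- c)"
  by (simp add: vec_eq_iff forall_3)

definition ico_list :: "(real^3) list" where
  "ico_list = [vec3 0 tau 1, vec3 0 tau (-1), vec3 0 (-tau) 1, vec3 0 (-tau) (-1),
    vec3 1 0 tau, vec3 1 0 (-tau), vec3 (-1) 0 tau, vec3 (-1) 0 (-tau),
    vec3 tau 1 0, vec3 tau (-1) 0, vec3 (-tau) 1 0, vec3 (-tau) (-1) 0]"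

definition root_list :: "(real^3) list" where
  "root_list = [vec3 2 0 0, vec3 0 2 0, vec3 0 0 2,
    vec3 tau (tau - 1) 1, vec3 tau (tau - 1) (-1), vec3 tau (1 - tau) 1, vec3 tau (1 - tau) (-1),
    vec3 1 tau (tau - 1), vec3 1 tau (1 - tau), vec3 (-1) tau (tau - 1), vec3 (-1) tau (1 - tau),
    vec3 (tau - 1) 1 tau, vec3 (tau - 1) (-1) tau, vec3 (1 - tau) 1 tau, vec3 (tau - 1) 1 (- tau)]"

lemma setcompr_doubleton:
  "{f s t | s t. s \<in> {a, b} \<and> t \<in> {c, d}} = {f a c, f a d, f b c, f b d}"
  "{g s | s. s \<in> {a, b}} = {g a, g b}"
  by blast+

lemma Ico_eq: "Ico = set ico_list"
  unfolding Ico_def sgns_def ico_list_def by (simp only: setcompr_doubleton) auto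

lemma Rplus_eq: "Rplus = set root_list"
  unfolding Rplus_def sgns_def root_list_def inverse_tau by (simp only: setcompr_doubleton) auto

lemma distinct_ico_list: "distinct ico_list"
  using tau_bounds by (simp add: ico_list_def vec3_eq_iff)

lemma distinct_root_list: "distinct root_list"
  using tau_bounds by (simp add: root_list_def vec3_eq_iff)

lemma finite_Ico: "finite Ico"
  by (simp add: Ico_eq)

lemma card_Ico: "card Ico = 12"
  by (simp add: Ico_eq distinct_card[OF distinct_ico_list]) (simp add: ico_list_def)

lemma uminus_mem_Ico: "y \<in> Ico \<Longrightarrow> - y \<in> Ico"
  unfolding Ico_eq ico_list_def by (auto simp: uminus_vec3)

lemma uminus_image_Ico: "uminus ` Ico = Ico"
  using uminus_mem_Ico by (intro endo_inj_surj finite_Ico) auto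

text \<open>The case checks below need no inequalities about tau: tau_sq and tau_mult_tau_left
  bring every coordinate into the form a + b tau, so the matching vector is found syntactically.\<close>

lemma refl_mem_Ico: "v \<in> Rplus \<Longrightarrow> y \<in> Ico \<Longrightarrow> refl v y \<in> Ico"
  unfolding Rplus_eq Ico_eq root_list_def ico_list_def
  apply (simp only: set_simps insert_iff empty_iff)
  apply (elim disjE)
  apply (simp_all only: refl_def inner_vec3 vec3_diff_scaleR)
  apply (simp_all add: vec3_eq_iff algebra_simps tau_sq tau_mult_tau_left)
  done

lemma refl_image_Ico: "v \<in> Rplus \<Longrightarrow> refl v ` Ico = Ico"
  using refl_mem_Ico by (intro endo_inj_surj finite_Ico) (auto intro: inj_on_inverseI refl_refl)

text \<open>Five roots are orthogonal to y0; the other ten reflections map y0 bijectively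
  onto Ico - {y0, -y0}.\<close>

lemma sum_Rplus_refl_orbit:
  fixes g :: "real^3 \<Rightarrow> real"
  assumes "y0 \<in> Ico"
  shows "(\<Sum>v\<in>Rplus. g (refl v y0)) = 4 * g y0 + (\<Sum>y\<in>Ico. g y) - g (- y0)"
  using assms
  unfolding Rplus_eq Ico_eq sum.distinct_set_conv_list[OF distinct_root_list]
    sum.distinct_set_conv_list[OF distinct_ico_list]
  unfolding root_list_def ico_list_def
  apply (simp only: set_simps insert_iff empty_iff list.map sum_list.Cons sum_list.Nil)
  apply (elim disjE)
  apply (simp_all only: refl_def inner_vec3 vec3_diff_scaleR uminus_vec3)
  apply (simp_all add: algebra_simps tau_sq tau_mult_tau_left)
  done

section \<open>The generating series\<close>

definition ico_series :: "real \<Rightarrow> real^3 \<Rightarrow> real fps" where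
  "ico_series k x = (\<Prod>y\<in>Ico. neg_binomial_series k (x \<bullet> y))"

definition gen_series :: "real \<Rightarrow> real^3 \<Rightarrow> real^3 \<Rightarrow> real fps" where
  "gen_series k y0 x = neg_binomial_series 1 (x \<bullet> y0) * ico_series k x"

lemma has_fps_expansion_genfun: "genfun k y0 x has_fps_expansion gen_series k y0 x"
  unfolding genfun_def[abs_def] gen_series_def ico_series_def
  by (intro has_fps_expansion_mult has_fps_expansion_prod has_fps_expansion_inverse_linear
      has_fps_expansion_neg_binomial_series)

lemma q_eq_gen_series_nth: "q k n y0 x = fps_nth (gen_series k y0 x) n"
  by (simp add: q_def fps_nth_fps_expansion_real[OF has_fps_expansion_genfun])

lemma gen_series_scaleR: "gen_series k y0 (s *\<^sub>R x) = gen_series k y0 x oo (fps_const s * fps_X)"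
  by (simp add: gen_series_def ico_series_def fps_compose_mult_distrib fps_compose_prod_distrib
      neg_binomial_series_compose_linear)

lemma q_scaleR: "q k n y0 (s *\<^sub>R x) = s ^ n * q k n y0 x"
  by (simp add: q_eq_gen_series_nth gen_series_scaleR fps_compose_linear)

lemma ico_series_uminus: "ico_series k (- x) = ico_series k x"
proof -
  have "ico_series k (- x) = (\<Prod>y\<in>uminus ` Ico. neg_binomial_series k (x \<bullet> y))"
    by (simp add: ico_series_def prod.reindex)
  then show ?thesis by (simp add: uminus_image_Ico ico_series_def)
qed

lemma ico_series_refl:
  assumes "v \<in> Rplus"
  shows "ico_series k (refl v x) = ico_series k x"
proof -
  have "inj_on (refl v) Ico"
    by (auto intro: inj_on_inverseI refl_refl)
  then have "ico_series k (refl v x) = (\<Prod>y\<in>refl v ` Ico. neg_binomial_series k (x \<bullet> y))"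
    by (simp add: ico_series_def prod.reindex inner_refl_left)
  then show ?thesis by (simp add: refl_image_Ico[OF assms] ico_series_def)
qed

lemma has_coeffwise_derivative_gen_series:
  "has_coeffwise_derivative (gen_series k y0)
     (fps_X * gen_series k y0 x * (fps_const (w \<bullet> y0) * neg_binomial_series 1 (x \<bullet> y0)
        + (\<Sum>y\<in>Ico. fps_const (k * (w \<bullet> y)) * neg_binomial_series 1 (x \<bullet> y)))) x w"
proof -
  let ?E = "neg_binomial_series"
  have "has_coeffwise_derivative (\<lambda>z. ?E 1 (z \<bullet> y0) * ico_series k z)
      (?E 1 (x \<bullet> y0) * (fps_const (1 * (w \<bullet> y0)) * fps_X * ?E 1 (x \<bullet> y0)) * ico_series k x
       + ?E 1 (x \<bullet> y0) * (ico_series k x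
          * (\<Sum>y\<in>Ico. fps_const (k * (w \<bullet> y)) * fps_X * ?E 1 (x \<bullet> y)))) x w"
    unfolding ico_series_def
    by (intro has_coeffwise_derivative_mult has_coeffwise_derivative_prod finite_Ico
        has_coeffwise_derivative_neg_binomial_series)
  then show ?thesis
    by (simp add: gen_series_def[abs_def] sum_distrib_left algebra_simps)
qed

text \<open>q_geom k m y0 x y = sum_{j <= m} q_j(x;y0) <x,y>^(m - j).\<close>

definition q_geom :: "real \<Rightarrow> nat \<Rightarrow> real^3 \<Rightarrow> real^3 \<Rightarrow> real^3 \<Rightarrow> real" where
  "q_geom k m y0 x y = fps_nth (gen_series k y0 x * neg_binomial_series 1 (x \<bullet> y)) m"

lemma has_real_derivative_q_Suc:
  "((\<lambda>t. q k (Suc m) y0 (x + t *\<^sub>R w)) has_real_derivative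
     (w \<bullet> y0) * q_geom k m y0 x y0 + k * (\<Sum>y\<in>Ico. (w \<bullet> y) * q_geom k m y0 x y)) (at 0)"
proof -
  let ?G = "gen_series k y0 x" and ?E = "neg_binomial_series 1"
  let ?L = "fps_const (w \<bullet> y0) * ?E (x \<bullet> y0) + (\<Sum>y\<in>Ico. fps_const (k * (w \<bullet> y)) * ?E (x \<bullet> y))"
  have "((\<lambda>t. q k (Suc m) y0 (x + t *\<^sub>R w)) has_real_derivative fps_nth (fps_X * ?G * ?L) (Suc m)) (at 0)"
    using has_coeffwise_derivative_gen_series[of k y0 x w]
    by (simp add: has_coeffwise_derivative_def q_eq_gen_series_nth)
  also have "fps_nth (fps_X * ?G * ?L) (Suc m) = fps_nth (?G * ?L) m"
    by (simp add: mult.assoc)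
  also have "?G * ?L = fps_const (w \<bullet> y0) * (?G * ?E (x \<bullet> y0))
      + (\<Sum>y\<in>Ico. fps_const (k * (w \<bullet> y)) * (?G * ?E (x \<bullet> y)))"
    by (simp add: distrib_left sum_distrib_left mult.left_commute)
  also have "fps_nth \<dots> m = (w \<bullet> y0) * q_geom k m y0 x y0 + k * (\<Sum>y\<in>Ico. (w \<bullet> y) * q_geom k m y0 x y)"
    by (simp add: q_geom_def fps_sum_nth sum_distrib_left mult.assoc)
  finally show ?thesis .
qed

lemma euler_identity_q:
  "(real m + 1 + k * real (card Ico)) * q k m y0 x = q_geom k m y0 x y0 + k * (\<Sum>y\<in>Ico. q_geom k m y0 x y)"
proof -
  let ?G = "gen_series k y0 x" and ?E = "neg_binomial_series 1"
  let ?L = "fps_const (x \<bullet> y0) * ?E (x \<bullet> y0) + (\<Sum>y\<in>Ico. fps_const (k * (x \<bullet> y)) * ?E (x \<bullet> y))"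
  have "((\<lambda>t. q k m y0 (x + t *\<^sub>R x)) has_real_derivative fps_nth (fps_X * ?G * ?L) m) (at 0)"
    using has_coeffwise_derivative_gen_series[of k y0 x x]
    by (simp add: has_coeffwise_derivative_def q_eq_gen_series_nth)
  moreover have "q k m y0 (x + t *\<^sub>R x) = (1 + t) ^ m * q k m y0 x" for t
    using q_scaleR[of k m y0 "1 + t" x] by (simp add: algebra_simps)
  moreover have "((\<lambda>t. (1 + t) ^ m * q k m y0 x) has_real_derivative real m * q k m y0 x) (at 0)"
    by (auto intro!: derivative_eq_intros)
  ultimately have "real m * q k m y0 x = fps_nth (fps_X * ?G * ?L) m"
    using DERIV_unique by force
  also have "fps_X * ?G * ?L = ?G * (fps_X * ?L)"
    by (simp only: ac_simps)
  also have "fps_X * ?L = (?E (x \<bullet> y0) - 1) + (\<Sum>y\<in>Ico. fps_const k * (?E (x \<bullet> y) - 1))"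
    unfolding fps_X_mult_neg_binomial_series_one[symmetric]
    by (simp add: distrib_left sum_distrib_left ac_simps flip: fps_const_mult)
  also have "?G * \<dots> = (?G * ?E (x \<bullet> y0) - ?G) + (\<Sum>y\<in>Ico. fps_const k * (?G * ?E (x \<bullet> y) - ?G))"
    by (simp add: ring_distribs sum_distrib_left ac_simps)
  also have "fps_nth \<dots> m = q_geom k m y0 x y0 - q k m y0 x + k * (\<Sum>y\<in>Ico. q_geom k m y0 x y - q k m y0 x)"
    by (simp add: q_geom_def q_eq_gen_series_nth fps_sum_nth sum_distrib_left)
  finally have "real m * q k m y0 x = q_geom k m y0 x y0 - q k m y0 x
      + k * ((\<Sum>y\<in>Ico. q_geom k m y0 x y) - real (card Ico) * q k m y0 x)"
    by (simp add: sum_subtractf)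
  then show ?thesis
    by (simp add: algebra_simps)
qed

lemma q_geom_uminus:
  "2 * q_geom k m y0 x (- y0) = (1 + (-1) ^ m) * q k m y0 x"
proof -
  let ?E = "neg_binomial_series 1" and ?P = "ico_series k x"
  have "gen_series k y0 x * ?E (x \<bullet> - y0) + gen_series k y0 x * ?E (x \<bullet> - y0)
      = ?P * (2 * (?E (x \<bullet> y0) * ?E (- (x \<bullet> y0))))"
    by (simp add: gen_series_def algebra_simps)
  also have "\<dots> = gen_series k y0 x + gen_series k y0 (- x)"
    by (simp add: neg_binomial_series_one_mult_uminus gen_series_def ico_series_uminus algebra_simps)
  finally have "fps_nth (gen_series k y0 x * ?E (x \<bullet> - y0) + gen_series k y0 x * ?E (x \<bullet> - y0)) m
      = q k m y0 x + q k m y0 (- x)"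
    by (simp add: q_eq_gen_series_nth)
  moreover have "q k m y0 (- x) = (- 1) ^ m * q k m y0 x"
    using q_scaleR[of k m y0 "- 1" x] by simp
  ultimately show ?thesis
    by (simp add: q_geom_def algebra_simps)
qed

lemma q_diff_refl:
  assumes "v \<in> Rplus" and "x \<bullet> v \<noteq> 0"
  shows "(q k (Suc m) y0 x - q k (Suc m) y0 (refl v x)) / (x \<bullet> v) * (u \<bullet> v)
      = (u \<bullet> (y0 - refl v y0)) * q_geom k m y0 x (refl v y0)"
proof -
  let ?E = "neg_binomial_series 1" and ?P = "ico_series k x"
  let ?a = "x \<bullet> y0" and ?b = "x \<bullet> refl v y0"
  have "gen_series k y0 x - gen_series k y0 (refl v x) = (?E ?a - ?E ?b) * ?P"
    by (simp add: gen_series_def ico_series_refl[OF assms(1)] inner_refl_left algebra_simps)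
  also have "\<dots> = fps_X * (fps_const (?a - ?b) * (gen_series k y0 x * ?E ?b))"
    by (simp add: neg_binomial_series_one_diff gen_series_def ac_simps)
  finally have "q k (Suc m) y0 x - q k (Suc m) y0 (refl v x)
      = (x \<bullet> (y0 - refl v y0)) * q_geom k m y0 x (refl v y0)"
    by (simp add: q_eq_gen_series_nth q_geom_def inner_diff_right flip: fps_sub_nth)
  then have "(q k (Suc m) y0 x - q k (Suc m) y0 (refl v x)) / (x \<bullet> v) * (u \<bullet> v)
      = (x \<bullet> (y0 - refl v y0)) / (x \<bullet> v) * (u \<bullet> v) * q_geom k m y0 x (refl v y0)"
    by (simp add: ac_simps)
  then show ?thesis
    by (simp only: inner_diff_refl_ratio[OF assms(2)])
qed

section \<open>The Dunkl operator\<close>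

lemma dunkl_dir_eq:
  "dunkl_dir k u f x = (\<Sum>i\<in>UNIV. u $ i * partial i f x)
     + k * (\<Sum>v\<in>Rplus. (f x - f (refl v x)) / (x \<bullet> v) * (u \<bullet> v))"
proof -
  have "(\<Sum>i\<in>UNIV. u $ i * (k * (\<Sum>v\<in>Rplus. (f x - f (refl v x)) / (x \<bullet> v) * v $ i)))
      = k * (\<Sum>v\<in>Rplus. (f x - f (refl v x)) / (x \<bullet> v) * (\<Sum>i\<in>UNIV. u $ i * v $ i))"
    by (simp add: sum_distrib_left sum_distrib_right sum_divide_distrib mult_ac) (rule sum.swap)
  then show ?thesis
    by (simp add: dunkl_dir_def dunkl_def distrib_left sum.distrib inner_vec_def)
qed

lemma sum_inner_axis: "(\<Sum>i\<in>UNIV. u $ i * (axis i 1 \<bullet> z)) = u \<bullet> (z :: real^'n)"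
  by (simp only: inner_axis') (simp add: inner_vec_def)

lemma sum_Ico_Rplus_reflection:
  fixes h :: "real^3 \<Rightarrow> real"
  assumes "y0 \<in> Ico"
  shows "(\<Sum>y\<in>Ico. (u \<bullet> y) * h y) + (\<Sum>v\<in>Rplus. (u \<bullet> (y0 - refl v y0)) * h (refl v y0))
      = (u \<bullet> y0) * ((\<Sum>y\<in>Ico. h y) - 2 * h (- y0))"
proof -
  have orbit: "(\<Sum>v\<in>Rplus. (u \<bullet> (y0 - refl v y0)) * h (refl v y0))
      = (\<Sum>y\<in>Ico. (u \<bullet> y0 - u \<bullet> y) * h y) - 2 * (u \<bullet> y0) * h (- y0)"
    using sum_Rplus_refl_orbit[OF assms, of "\<lambda>y. (u \<bullet> y0 - u \<bullet> y) * h y"]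
    by (simp add: inner_diff_right)
  have "(\<Sum>y\<in>Ico. (u \<bullet> y0 - u \<bullet> y) * h y) = (u \<bullet> y0) * (\<Sum>y\<in>Ico. h y) - (\<Sum>y\<in>Ico. (u \<bullet> y) * h y)"
    by (simp add: left_diff_distrib sum_subtractf sum_distrib_left)
  then show ?thesis
    unfolding orbit by (simp add: algebra_simps)
qed

lemma dunkl_dir_q_Suc:
  assumes "y0 \<in> Ico" and "\<forall>v\<in>Rplus. x \<bullet> v \<noteq> 0"
  shows "dunkl_dir k u (q k (Suc m) y0) x
      = (u \<bullet> y0) * (real m + 1 + 12 * k - k * (1 + (-1) ^ m)) * q k m y0 x"
proof -
  let ?H = "q_geom k m y0 x"
  define z where "z = ?H y0 *\<^sub>R y0 + k *\<^sub>R (\<Sum>y\<in>Ico. ?H y *\<^sub>R y)"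
  have "partial i (q k (Suc m) y0) x = axis i 1 \<bullet> z" for i
  proof -
    have "((\<lambda>t. q k (Suc m) y0 (x + t *\<^sub>R axis i 1)) has_real_derivative axis i 1 \<bullet> z) (at 0)"
      using has_real_derivative_q_Suc[of k m y0 x "axis i 1"]
      by (simp add: z_def inner_add_right inner_sum_right mult.commute)
    then show ?thesis
      unfolding partial_def by (rule DERIV_imp_deriv)
  qed
  then have "(\<Sum>i\<in>UNIV. u $ i * partial i (q k (Suc m) y0) x) = u \<bullet> z"
    by (simp add: sum_inner_axis)
  also have "\<dots> = (u \<bullet> y0) * ?H y0 + k * (\<Sum>y\<in>Ico. (u \<bullet> y) * ?H y)"
    by (simp add: z_def inner_add_right inner_sum_right mult.commute)
  finally have gradient: "(\<Sum>i\<in>UNIV. u $ i * partial i (q k (Suc m) y0) x)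
      = (u \<bullet> y0) * ?H y0 + k * (\<Sum>y\<in>Ico. (u \<bullet> y) * ?H y)" .
  have reflections: "(\<Sum>v\<in>Rplus. (q k (Suc m) y0 x - q k (Suc m) y0 (refl v x)) / (x \<bullet> v) * (u \<bullet> v))
      = (\<Sum>v\<in>Rplus. (u \<bullet> (y0 - refl v y0)) * ?H (refl v y0))"
    using assms(2) by (intro sum.cong refl q_diff_refl) auto
  have "dunkl_dir k u (q k (Suc m) y0) x = (u \<bullet> y0) * ?H y0
      + k * ((\<Sum>y\<in>Ico. (u \<bullet> y) * ?H y) + (\<Sum>v\<in>Rplus. (u \<bullet> (y0 - refl v y0)) * ?H (refl v y0)))"
    unfolding dunkl_dir_eq gradient reflections by (simp add: distrib_left add.assoc)
  also have "\<dots> = (u \<bullet> y0) * (?H y0 + k * (\<Sum>y\<in>Ico. ?H y) - k * (2 * ?H (- y0)))"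
    unfolding sum_Ico_Rplus_reflection[OF assms(1)] by (simp add: algebra_simps)
  also have "?H y0 + k * (\<Sum>y\<in>Ico. ?H y) = (real m + 1 + 12 * k) * q k m y0 x"
    using euler_identity_q[of m k y0 x] by (simp add: card_Ico algebra_simps)
  also have "2 * ?H (- y0) = (1 + (-1) ^ m) * q k m y0 x"
    by (rule q_geom_uminus)
  finally show ?thesis
    by (simp add: algebra_simps)
qed

theorem mainTheorem2:
  fixes k :: real and y0 u x :: "real^3"
  assumes "k \<ge> 0" and "y0 \<in> Ico"
    and "\<forall>v\<in>Rplus. x \<bullet> v \<noteq> 0"
  shows "(\<forall>n::nat. n \<ge> 1 \<longrightarrow>
            dunkl_dir k u (q k (2*n) y0) x
              = 2 * (u \<bullet> y0) * (6*k + real n) * q k (2*n - 1) y0 x)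
       \<and> (\<forall>n::nat.
            dunkl_dir k u (q k (2*n+1) y0) x
              = (u \<bullet> y0) * (10*k + 2 * real n + 1) * q k (2*n) y0 x)"
proof (intro conjI allI impI)
  fix n :: nat
  assume "n \<ge> 1"
  then obtain m where m: "n = Suc m"
    by (cases n) auto
  have "dunkl_dir k u (q k (2*n) y0) x = dunkl_dir k u (q k (Suc (2*m + 1)) y0) x"
    by (simp add: m)
  also have "\<dots> = (u \<bullet> y0) * (real (2*m + 1) + 1 + 12 * k - k * (1 + (-1) ^ (2*m + 1))) * q k (2*m + 1) y0 x"
    by (rule dunkl_dir_q_Suc[OF assms(2,3)])
  finally show "dunkl_dir k u (q k (2*n) y0) x = 2 * (u \<bullet> y0) * (6*k + real n) * q k (2*n - 1) y0 x"
    by (simp add: m algebra_simps)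
next
  fix n :: nat
  show "dunkl_dir k u (q k (2*n+1) y0) x = (u \<bullet> y0) * (10*k + 2 * real n + 1) * q k (2*n) y0 x"
    using dunkl_dir_q_Suc[OF assms(2,3), of k u "2*n"] by (simp add: algebra_simps)
qed

end
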